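(* For all integers $0 \le p \le q$, $$F_{p,q}(x) \;=\; (1+x)^p \sum_{k=0}^{q} \binom{q}{k}\binom{p+k}{k} x^k.$$
   Context: Let $\mathbb{N} = \{0,1,2,\dots\}$. For $(p,q) \in \mathbb{N}^2$ and $n \in \mathbb{N}$, an unrestricted generalized jump path of length $n$ starting at $(p,q)$ is a sequence $(x_0, \dots, x_n)$ of points of $\mathbb{N}^2$ satisfying three conditions: - $x_0 = (p,q)$; - for every $i$, each coordinate of $x_{i+1}$ is at most the corresponding coordinate of $x_i$; - $x_{i+1} \ne x_i$ for every $i$. Let $u((p,q),n)$ denote the number of such paths. Define the polynomial $$F_{p,q}(x) = \sum_{k=0}^{p+q} u((p,q),k)\, x^k.$$ *)

theory Defs
  imports Main "HOL-Computational_Algebra.Polynomial"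
begin

definition jump_step :: "nat \<times> nat \<Rightarrow> nat \<times> nat \<Rightarrow> bool" where
  "jump_step a b \<longleftrightarrow> fst b \<le> fst a \<and> snd b \<le> snd a \<and> b \<noteq> a"

definition jump_paths :: "nat \<times> nat \<Rightarrow> nat \<Rightarrow> (nat \<times> nat) list set" where
  "jump_paths s n = {xs. length xs = Suc n \<and> xs ! 0 = s \<and>
      (\<forall>i<n. jump_step (xs ! i) (xs ! Suc i))}"

definition u :: "nat \<times> nat \<Rightarrow> nat \<Rightarrow> nat" where
  "u s n = card (jump_paths s n)"

definition F :: "nat \<Rightarrow> nat \<Rightarrow> int poly" where
  "F p q = (\<Sum>k = 0..p + q. monom (int (u (p, q) k)) k)"

end

theory Submission
  imports Defs
begin

text \<open>Splitting a path according to its first step gives \<open>u(s, n + 1) = \<Sum> u(t, n)\<close>, summed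
  over the points \<open>t \<noteq> s\<close> of the rectangle below \<open>s\<close>; for the generating functions this reads
  \<open>F(s) = 1 + x \<Sum> F(t)\<close>. Adding \<open>x F(s)\<close> to both sides turns the right-hand side into a sum
  over the full rectangle, so inclusion-exclusion over rectangles yields the local recurrence
  \<open>F(a+1, b+1) = (1 + x) (F(a, b+1) + F(a+1, b) - F(a, b))\<close> together with \<open>F(0, 0) = 1\<close>,
  \<open>F(a+1, 0) = (1 + x) F(a, 0)\<close> and \<open>F(0, b+1) = (1 + x) F(0, b)\<close>; these determine \<open>F\<close>.
  The closed form satisfies the same recurrence by Pascal's rule applied to both binomial
  coefficients. The identity holds for all \<open>p, q\<close>.\<close>

lemma jump_paths_0: "jump_paths s 0 = {[s]}"
  unfolding jump_paths_def by (auto simp: length_Suc_conv)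

lemma jump_step_iff_below: "jump_step s t \<longleftrightarrow> t \<in> {..fst s} \<times> {..snd s} - {s}"
  unfolding jump_step_def by (cases t) auto

lemma jump_paths_Suc:
  "jump_paths s (Suc n) = (\<Union>t \<in> {..fst s} \<times> {..snd s} - {s}. (#) s ` jump_paths t n)"
proof (intro equalityI subsetI)
  fix xs assume "xs \<in> jump_paths s (Suc n)"
  then obtain ys where xs: "xs = s # ys" and len: "length ys = Suc n"
    and steps: "\<forall>i<Suc n. jump_step (xs ! i) (xs ! Suc i)"
    by (auto simp: jump_paths_def length_Suc_conv)
  have "ys \<in> jump_paths (ys ! 0) n"
    using len steps unfolding xs jump_paths_def by auto
  moreover have "jump_step s (ys ! 0)"
    using steps[rule_format, of 0] xs by simp
  ultimately show "xs \<in> (\<Union>t \<in> {..fst s} \<times> {..snd s} - {s}. (#) s ` jump_paths t n)"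
    unfolding xs jump_step_iff_below by (intro UN_I imageI)
next
  fix xs assume "xs \<in> (\<Union>t \<in> {..fst s} \<times> {..snd s} - {s}. (#) s ` jump_paths t n)"
  then obtain t ys where "jump_step s t" "ys \<in> jump_paths t n" "xs = s # ys"
    unfolding jump_step_iff_below by auto
  then show "xs \<in> jump_paths s (Suc n)"
    unfolding jump_paths_def by (auto simp: less_Suc_eq_0_disj)
qed

lemma finite_jump_paths: "finite (jump_paths s n)"
  by (induction n arbitrary: s) (simp_all add: jump_paths_0 jump_paths_Suc)

lemma u_0: "u s 0 = 1"
  by (simp add: u_def jump_paths_0)

lemma u_Suc: "u s (Suc n) = (\<Sum>t \<in> {..fst s} \<times> {..snd s} - {s}. u t n)"
proof -
  have "u s (Suc n) = (\<Sum>t \<in> {..fst s} \<times> {..snd s} - {s}. card ((#) s ` jump_paths t n))"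
    unfolding u_def jump_paths_Suc
    by (rule card_UN_disjoint) (simp_all add: finite_jump_paths, auto simp: jump_paths_def)
  also have "\<dots> = (\<Sum>t \<in> {..fst s} \<times> {..snd s} - {s}. u t n)"
    unfolding u_def by (intro sum.cong refl card_image) (auto simp: inj_on_def)
  finally show ?thesis .
qed

lemma u_eq_0_if_too_long: "fst s + snd s < n \<Longrightarrow> u s n = 0"
proof (induction n arbitrary: s)
  case (Suc n)
  have "u t n = 0" if "t \<in> {..fst s} \<times> {..snd s} - {s}" for t
    using that Suc by (intro Suc.IH) (cases t; cases s; auto)
  then show ?case unfolding u_Suc by simp
qed simp

lemma coeff_F: "coeff (F p q) n = int (u (p, q) n)"
  using u_eq_0_if_too_long[of "(p, q)" n]
  by (cases "n \<le> p + q") (simp_all add: F_def coeff_sum coeff_monom)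

lemma coeff_X_times:
  "coeff ([:0, 1:] * (P :: 'a::comm_semiring_1 poly)) n = (case n of 0 \<Rightarrow> 0 | Suc m \<Rightarrow> coeff P m)"
  by (simp add: mult_pCons_left coeff_pCons split: nat.split)

lemma coeff_1_plus_X_times:
  "coeff ([:1, 1:] * (P :: 'a::comm_semiring_1 poly)) n =
     coeff P n + (case n of 0 \<Rightarrow> 0 | Suc m \<Rightarrow> coeff P m)"
  by (simp add: mult_pCons_left coeff_pCons split: nat.split)

lemma F_eq_1_plus_X_times_sum_below:
  "F p q = 1 + [:0, 1:] * (\<Sum>(a, b) \<in> {..p} \<times> {..q} - {(p, q)}. F a b)"
proof (rule poly_eqI)
  fix n
  show "coeff (F p q) n = coeff (1 + [:0, 1:] * (\<Sum>(a, b) \<in> {..p} \<times> {..q} - {(p, q)}. F a b)) n"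
  proof (cases n)
    case 0
    then show ?thesis by (simp add: coeff_X_times coeff_F u_0)
  next
    case (Suc m)
    have "int (u (p, q) n) = (\<Sum>t \<in> {..p} \<times> {..q} - {(p, q)}. int (u t m))"
      using u_Suc[of "(p, q)" m] Suc by simp
    then show ?thesis
      using Suc by (simp add: coeff_X_times coeff_F coeff_sum case_prod_beta)
  qed
qed

definition lattice_recurrence :: "'a::comm_ring_1 \<Rightarrow> (nat \<Rightarrow> nat \<Rightarrow> 'a) \<Rightarrow> bool" where
  "lattice_recurrence c T \<longleftrightarrow>
     T 0 0 = 1 \<and> (\<forall>b. T 0 (Suc b) = c * T 0 b) \<and> (\<forall>a. T (Suc a) 0 = c * T a 0) \<and>
     (\<forall>a b. T (Suc a) (Suc b) = c * (T a (Suc b) + T (Suc a) b - T a b))"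

lemma lattice_recurrence_unique:
  assumes "lattice_recurrence c T" and "lattice_recurrence c T'"
  shows "T = T'"
proof (intro ext)
  fix p q show "T p q = T' p q"
  proof (induction p arbitrary: q)
    case 0
    show ?case by (induction q) (use assms in \<open>simp_all add: lattice_recurrence_def\<close>)
  next
    case (Suc a)
    show ?case by (induction q) (use assms Suc.IH in \<open>simp_all add: lattice_recurrence_def\<close>)
  qed
qed

lemma lattice_recurrence_if_sum_below:
  fixes T :: "nat \<Rightarrow> nat \<Rightarrow> 'a::comm_ring_1"
  assumes below: "\<And>p q. T p q = 1 + y * (\<Sum>(a, b) \<in> {..p} \<times> {..q} - {(p, q)}. T a b)"
  shows "lattice_recurrence (1 + y) T"
proof -
  define R where "R p q = (\<Sum>a\<le>p. \<Sum>b\<le>q. T a b)" for p q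
  have box: "(1 + y) * T p q = 1 + y * R p q" for p q
  proof -
    have "R p q = T p q + (\<Sum>(a, b) \<in> {..p} \<times> {..q} - {(p, q)}. T a b)"
      unfolding R_def sum.cartesian_product by (subst sum.remove[of _ "(p, q)"]) auto
    then show ?thesis using below[of p q] by (simp add: algebra_simps)
  qed
  have R_Suc_left: "R (Suc a) b = R a b + (\<Sum>j\<le>b. T (Suc a) j)" for a b
    by (simp add: R_def)
  have R_Suc_right: "R a (Suc b) = R a b + (\<Sum>i\<le>a. T i (Suc b))" for a b
    by (simp add: R_def sum.distrib)
  have "T 0 0 = 1"
    using box[of 0 0] by (simp add: R_def algebra_simps)
  moreover have "T 0 (Suc b) = (1 + y) * T 0 b" for b
    using box[of 0 "Suc b"] box[of 0 b] R_Suc_right[of 0 b] by (simp add: algebra_simps)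
  moreover have "T (Suc a) 0 = (1 + y) * T a 0" for a
    using box[of "Suc a" 0] box[of a 0] R_Suc_left[of a 0] by (simp add: algebra_simps)
  moreover have "T (Suc a) (Suc b) = (1 + y) * (T a (Suc b) + T (Suc a) b - T a b)" for a b
    using box[of "Suc a" "Suc b"] box[of a "Suc b"] box[of "Suc a" b] box[of a b]
      R_Suc_left[of a "Suc b"] R_Suc_left[of a b] by (simp add: algebra_simps)
  ultimately show ?thesis
    unfolding lattice_recurrence_def by blast
qed

definition choose_product_poly :: "nat \<Rightarrow> nat \<Rightarrow> int poly" where
  "choose_product_poly p q = (\<Sum>k = 0..q. monom (int ((q choose k) * ((p + k) choose k))) k)"

lemma coeff_choose_product_poly:
  "coeff (choose_product_poly p q) n = int (q choose n) * int ((p + n) choose n)"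
  by (cases "n \<le> q") (simp_all add: choose_product_poly_def coeff_sum coeff_monom)

lemma choose_product_poly_0_right: "choose_product_poly p 0 = 1"
  by (simp add: choose_product_poly_def)

lemma choose_product_poly_0_Suc:
  "choose_product_poly 0 (Suc b) = [:1, 1:] * choose_product_poly 0 b"
  by (rule poly_eqI, unfold coeff_1_plus_X_times coeff_choose_product_poly) (simp split: nat.split)

lemma choose_product_poly_Suc_Suc:
  "choose_product_poly (Suc a) (Suc b) =
     choose_product_poly a (Suc b) + [:1, 1:] * choose_product_poly (Suc a) b - choose_product_poly a b"
proof (rule poly_eqI)
  fix n
  show "coeff (choose_product_poly (Suc a) (Suc b)) n =
    coeff (choose_product_poly a (Suc b) + [:1, 1:] * choose_product_poly (Suc a) b
      - choose_product_poly a b) n"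
  proof (cases n)
    case 0
    then show ?thesis by (simp add: coeff_1_plus_X_times coeff_choose_product_poly)
  next
    case (Suc j)
    have "int (Suc b choose Suc j) = int (b choose j) + int (b choose Suc j)"
      and "int (Suc a + Suc j choose Suc j) = int (Suc a + j choose j) + int (a + Suc j choose Suc j)"
      by simp_all
    then show ?thesis
      using Suc by (simp add: coeff_1_plus_X_times coeff_choose_product_poly algebra_simps)
  qed
qed

lemma lattice_recurrence_closed_form:
  "lattice_recurrence [:1, 1:] (\<lambda>p q. [:1, 1:] ^ p * choose_product_poly p q)"
proof -
  have "[:1, 1:] ^ Suc a * choose_product_poly (Suc a) (Suc b) =
      [:1, 1:] * ([:1, 1:] ^ a * choose_product_poly a (Suc b)
        + [:1, 1:] ^ Suc a * choose_product_poly (Suc a) b - [:1, 1:] ^ a * choose_product_poly a b)"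
    for a b
    by (simp add: choose_product_poly_Suc_Suc algebra_simps)
  then show ?thesis
    by (simp add: lattice_recurrence_def choose_product_poly_0_right choose_product_poly_0_Suc)
qed

theorem theorem3p1:
  fixes p q :: nat
  assumes "p \<le> q"
  shows "F p q = [:1, 1:] ^ p * (\<Sum>k = 0..q. monom (int ((q choose k) * ((p + k) choose k))) k)"
proof -
  have "lattice_recurrence (1 + [:0, 1:]) F"
    by (rule lattice_recurrence_if_sum_below) (rule F_eq_1_plus_X_times_sum_below)
  then have "lattice_recurrence [:1, 1:] F"
    by (simp add: one_pCons)
  then have "F = (\<lambda>p q. [:1, 1:] ^ p * choose_product_poly p q)"
    using lattice_recurrence_closed_form by (rule lattice_recurrence_unique)
  then show ?thesis
    unfolding choose_product_poly_def by meson
qed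

end
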